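(* Let $V$ be a finite set, $A\subseteq V$, ${\bf t}=(t_i)_{i\in V}$ and $\lambda$ complex numbers, and let $I=(i_1,\ldots,i_k)$ and $J=(j_1,\ldots,j_k)$ be ordered $k$-tuples of distinct elements of $A$. Then $$\int\mathcal{D}_{A,{\bf t}}(\psi,\bar\psi)\,\mathcal{O}_{I,J}\,f_A^{(\lambda)}=\begin{cases}\lambda+\sum_{i\in A}(t_i-\lambda)&\text{if }k=0,\\1&\text{if }k=1,\\0&\text{if }k\ge2.\end{cases}$$
   Context: For each $i\in V$ let $\psi_i,\bar\psi_i$ be anticommuting generators of a Grassmann algebra over $\mathbb{C}$; $\tau_A=\prod_{i\in A}\bar\psi_i\psi_i$ ($\tau_\emptyset=1$); $f_A^{(\lambda)}=\lambda(1-|A|)\tau_A+\sum_{i\in A}\tau_{A\setminus\{i\}}-\sum_{i,j\in A,\ i\neq j}\bar\psi_i\psi_j\,\tau_{A\setminus\{i,j\}}$; $\mathcal{O}_{I,J}=\bar\psi_{i_1}\psi_{j_1}\cdots\bar\psi_{i_k}\psi_{j_k}$ ($=1$ for $k=0$). $\mathcal{D}_{A,{\bf t}}(\psi,\bar\psi)=\prod_{i\in A}d\psi_i\,d\bar\psi_i\,e^{t_i\bar\psi_i\psi_i}$, with $\int d\psi_i\,d\bar\psi_i\,\bar\psi_i\psi_i=1$ and integrals of $1,\psi_i,\bar\psi_i$ equal to $0$. *)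

theory Defs
  imports Complex_Main "HOL-Library.Product_Lexorder"
begin

text \<open>Grassmann algebra over the complex numbers with generators of a linearly ordered
type 'g.  An element is given by its coefficients on the basis monomials
e_S = g_1 g_2 ... g_m (S = {g_1 < ... < g_m} a finite set of generators).\<close>

type_synonym 'g grass = "'g set \<Rightarrow> complex"

definition inv_count :: "'g::linorder set \<Rightarrow> 'g set \<Rightarrow> nat" where
  "inv_count T U = card {(a, b). a \<in> T \<and> b \<in> U \<and> b < a}"

text \<open>Product: e_T e_U = (-1)^(inversions) e_(T \<union> U) if T, U disjoint, 0 otherwise.\<close>
definition gmul :: "'g::linorder grass \<Rightarrow> 'g grass \<Rightarrow> 'g grass" where
  "gmul x y = (\<lambda>S. if finite S
      then (\<Sum>T\<in>Pow S. (-1) ^ inv_count T (S - T) * x T * y (S - T)) else 0)"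

definition gadd :: "'g grass \<Rightarrow> 'g grass \<Rightarrow> 'g grass" where
  "gadd x y = (\<lambda>S. x S + y S)"

definition gscal :: "complex \<Rightarrow> 'g grass \<Rightarrow> 'g grass" where
  "gscal c x = (\<lambda>S. c * x S)"

definition gbasis :: "'g set \<Rightarrow> 'g grass" where
  "gbasis S = (\<lambda>U. if U = S then 1 else 0)"

definition gone :: "'g grass" where
  "gone = gbasis {}"

definition gconst :: "complex \<Rightarrow> 'g grass" where
  "gconst c = gscal c gone"

definition gprod_list :: "'g::linorder grass list \<Rightarrow> 'g grass" where
  "gprod_list xs = foldr gmul xs gone"

definition psi :: "'v::linorder \<Rightarrow> ('v \<times> bool) grass" where
  "psi i = gbasis {(i, False)}"

definition psibar :: "'v::linorder \<Rightarrow> ('v \<times> bool) grass" where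
  "psibar i = gbasis {(i, True)}"

definition tau :: "'v::linorder set \<Rightarrow> ('v \<times> bool) grass" where
  "tau A = gprod_list (map (\<lambda>i. gmul (psibar i) (psi i)) (sorted_list_of_set A))"

definition fA :: "complex \<Rightarrow> 'v::linorder set \<Rightarrow> ('v \<times> bool) grass" where
  "fA lam A = (\<lambda>S. lam * (1 - of_nat (card A)) * tau A S
      + (\<Sum>i\<in>A. tau (A - {i}) S)
      - (\<Sum>i\<in>A. \<Sum>j\<in>A - {i}. gmul (gmul (psibar i) (psi j)) (tau (A - {i, j})) S))"

definition obs :: "'v::linorder list \<Rightarrow> 'v list \<Rightarrow> ('v \<times> bool) grass" where
  "obs I J = gprod_list (map (\<lambda>(i, j). gmul (psibar i) (psi j)) (zip I J))"

text \<open>Density factor  prod_{i in A} e^{t_i psibar_i psi_i} = prod_{i in A} (1 + t_i psibar_i psi_i)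
 (the exponent is nilpotent of order 2).\<close>
definition gauss_weight :: "('v::linorder \<Rightarrow> complex) \<Rightarrow> 'v set \<Rightarrow> ('v \<times> bool) grass" where
  "gauss_weight t A = gprod_list
     (map (\<lambda>i. gadd gone (gscal (t i) (gmul (psibar i) (psi i)))) (sorted_list_of_set A))"

definition gens :: "'v set \<Rightarrow> ('v \<times> bool) set" where
  "gens A = (\<lambda>i. (i, True)) ` A \<union> (\<lambda>i. (i, False)) ` A"

text \<open>Berezin integral  \<integral> prod_{i in A} d psi_i d psibar_i  F : writing
 F = tau A * G + (terms lacking some generator of A) with G free of the generators of A,
 the integral is G (since \<integral> d psi_i d psibar_i psibar_i psi_i = 1 and the pairs are even).
 The coefficient of tau A * e_S in basis e_(gens A \<union> S) is \<plusminus>1.\<close>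
definition berezin :: "'v::linorder set \<Rightarrow> ('v \<times> bool) grass \<Rightarrow> ('v \<times> bool) grass" where
  "berezin A F = (\<lambda>S. if S \<inter> gens A = {}
      then F (gens A \<union> S) * gmul (tau A) (gbasis S) (gens A \<union> S) else 0)"

end

theory Submission
  imports Defs
begin

text \<open>
  Every object involved is a combination of signed monomials of definite charge (at each
  site, the number of factors \<open>\<bar>\<psi>\<^sub>i\<close> minus the number of factors \<open>\<psi>\<^sub>i\<close>).  The Berezin
  integral reads off the coefficient of the top monomial \<open>\<tau>\<^sub>A\<close>, which has charge zero, and
  the Gaussian weight has charge zero, so every term of nonzero charge integrates to zero.
  The weight fixes \<open>\<tau>\<^sub>A\<close> and maps \<open>\<tau>\<^bsub>A - {i}\<^esub>\<close> to \<open>\<tau>\<^bsub>A - {i}\<^esub> + t\<^sub>i \<tau>\<^sub>A\<close>, which gives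
  \<open>\<lambda>(1 - |A|) + \<Sum>\<^sub>i t\<^sub>i\<close> for \<open>k = 0\<close>.  For \<open>k \<ge> 2\<close> the observable has degree \<open>2k\<close> while
  every term of \<open>f\<^sub>A\<close> has degree at least \<open>2|A| - 2\<close>, so the product vanishes.  For
  \<open>I = (a)\<close>, \<open>J = (b)\<close> exactly one term of \<open>f\<^sub>A\<close> completes \<open>\<bar>\<psi>\<^sub>a\<psi>\<^sub>b\<close> to \<open>\<tau>\<^sub>A\<close>: the term
  \<open>\<tau>\<^bsub>A - {a}\<^esub>\<close> if \<open>a = b\<close>, and otherwise \<open>-\<bar>\<psi>\<^sub>b\<psi>\<^sub>a\<tau>\<^bsub>A - {a,b}\<^esub>\<close>, whose sign is cancelled by
  \<open>\<bar>\<psi>\<^sub>a\<psi>\<^sub>b\<bar>\<psi>\<^sub>b\<psi>\<^sub>a = -\<bar>\<psi>\<^sub>a\<psi>\<^sub>a\<bar>\<psi>\<^sub>b\<psi>\<^sub>b\<close>.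
\<close>

section \<open>Inversion signs\<close>

abbreviation inv_sign :: "'g::linorder set \<Rightarrow> 'g set \<Rightarrow> complex" where
  "inv_sign T U \<equiv> (-1) ^ inv_count T U"

lemma inv_count_empty [simp]: "inv_count {} U = 0" "inv_count T {} = 0"
  by (simp_all add: inv_count_def)

lemma inv_count_Un_left:
  assumes "finite T" "finite U" "finite W" "T \<inter> U = {}"
  shows "inv_count (T \<union> U) W = inv_count T W + inv_count U W"
proof -
  have "{(a, b). a \<in> T \<union> U \<and> b \<in> W \<and> b < a} =
        {(a, b). a \<in> T \<and> b \<in> W \<and> b < a} \<union> {(a, b). a \<in> U \<and> b \<in> W \<and> b < a}" by auto
  moreover have "finite {(a, b). a \<in> T \<and> b \<in> W \<and> b < a}"
    by (rule finite_subset[of _ "T \<times> W"]) (use assms in auto)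
  moreover have "finite {(a, b). a \<in> U \<and> b \<in> W \<and> b < a}"
    by (rule finite_subset[of _ "U \<times> W"]) (use assms in auto)
  ultimately show ?thesis unfolding inv_count_def
    by (subst card_Un_disjoint[symmetric]) (use assms in auto)
qed

lemma inv_count_Un_right:
  assumes "finite T" "finite U" "finite W" "U \<inter> W = {}"
  shows "inv_count T (U \<union> W) = inv_count T U + inv_count T W"
proof -
  have "{(a, b). a \<in> T \<and> b \<in> U \<union> W \<and> b < a} =
        {(a, b). a \<in> T \<and> b \<in> U \<and> b < a} \<union> {(a, b). a \<in> T \<and> b \<in> W \<and> b < a}" by auto
  moreover have "finite {(a, b). a \<in> T \<and> b \<in> U \<and> b < a}"
    by (rule finite_subset[of _ "T \<times> U"]) (use assms in auto)
  moreover have "finite {(a, b). a \<in> T \<and> b \<in> W \<and> b < a}"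
    by (rule finite_subset[of _ "T \<times> W"]) (use assms in auto)
  ultimately show ?thesis unfolding inv_count_def
    by (subst card_Un_disjoint[symmetric]) (use assms in auto)
qed

lemma inv_count_swap:
  assumes "finite T" "finite U" "T \<inter> U = {}"
  shows "inv_count T U + inv_count U T = card T * card U"
proof -
  let ?X = "{(a, b). a \<in> T \<and> b \<in> U \<and> b < a}"
  let ?Y = "{(a, b). a \<in> T \<and> b \<in> U \<and> a < b}"
  have "?X \<union> ?Y = T \<times> U" using assms by (auto simp: not_less order.order_iff_strict)
  moreover have "finite ?X" "finite ?Y" by (rule finite_subset[of _ "T \<times> U"], use assms in auto)+
  moreover have "?X \<inter> ?Y = {}" by auto
  moreover have "card ?Y = inv_count U T"
  proof -
    have "?Y = (\<lambda>(a, b). (b, a)) ` {(a, b). a \<in> U \<and> b \<in> T \<and> b < a}" by auto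
    moreover have "inj_on (\<lambda>(a, b). (b, a)) {(a, b). a \<in> U \<and> b \<in> T \<and> b < a}"
      by (auto simp: inj_on_def)
    ultimately show ?thesis unfolding inv_count_def by (simp add: card_image)
  qed
  ultimately show ?thesis unfolding inv_count_def
    using card_Un_disjoint[of ?X ?Y] by (simp add: card_cartesian_product)
qed

lemma inv_sign_swap:
  assumes "finite T" "finite U" "T \<inter> U = {}"
  shows "inv_sign U T = (-1) ^ (card T * card U) * inv_sign T U"
proof -
  have "(-1::complex) ^ (card T * card U) = (-1) ^ inv_count T U * (-1) ^ inv_count U T"
    by (simp add: inv_count_swap[OF assms, symmetric] power_add)
  thus ?thesis by (simp add: power_mult_distrib[symmetric])
qed

lemma inv_sign_assoc:
  assumes "finite S" "T \<subseteq> S" "R \<subseteq> T"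
  shows "inv_sign T (S - T) * inv_sign R (T - R) = inv_sign R (S - R) * inv_sign (T - R) (S - T)"
proof -
  have fin: "finite T" "finite R" "finite (T - R)" "finite (S - T)"
    using assms by (meson finite_Diff finite_subset)+
  have "R \<union> (T - R) = T" "S - R = (T - R) \<union> (S - T)" "(T - R) \<inter> (S - T) = {}"
    using assms(2,3) by auto
  hence "inv_count T (S - T) + inv_count R (T - R) = inv_count R (S - R) + inv_count (T - R) (S - T)"
    using inv_count_Un_left[of R "T - R" "S - T"] inv_count_Un_right[of R "T - R" "S - T"] fin
    by simp
  thus ?thesis by (metis power_add)
qed

section \<open>The Grassmann algebra\<close>

definition supported :: "('g set \<Rightarrow> bool) \<Rightarrow> 'g grass \<Rightarrow> bool" where
  "supported P x \<longleftrightarrow> (\<forall>S. x S \<noteq> 0 \<longrightarrow> P S)"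

lemma supported_mono: "supported P x \<Longrightarrow> (\<And>S. P S \<Longrightarrow> Q S) \<Longrightarrow> supported Q x"
  by (auto simp: supported_def)

lemma supported_conj: "supported P x \<Longrightarrow> supported Q x \<Longrightarrow> supported (\<lambda>S. P S \<and> Q S) x"
  by (auto simp: supported_def)

lemma supported_gbasis: "P T \<Longrightarrow> supported P (gbasis T)"
  by (auto simp: supported_def gbasis_def)

lemma supported_gone: "P {} \<Longrightarrow> supported P gone"
  unfolding gone_def by (rule supported_gbasis)

lemma supported_gadd: "supported P x \<Longrightarrow> supported P y \<Longrightarrow> supported P (gadd x y)"
  unfolding supported_def gadd_def by (metis add.left_neutral)

lemma supported_gscal: "supported P x \<Longrightarrow> supported P (gscal c x)"
  by (auto simp: supported_def gscal_def)

lemma supported_gmul: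
  assumes "supported P x" "supported Q y"
    and "\<And>T U. finite T \<Longrightarrow> finite U \<Longrightarrow> T \<inter> U = {} \<Longrightarrow> P T \<Longrightarrow> Q U \<Longrightarrow> R (T \<union> U)"
  shows "supported R (gmul x y)"
  unfolding supported_def
proof (intro allI impI)
  fix S assume "gmul x y S \<noteq> 0"
  hence fin: "finite S" and ne: "(\<Sum>T\<in>Pow S. inv_sign T (S - T) * x T * y (S - T)) \<noteq> 0"
    by (auto simp: gmul_def split: if_splits)
  obtain T where T: "T \<subseteq> S" "inv_sign T (S - T) * x T * y (S - T) \<noteq> 0"
    using sum.not_neutral_contains_not_neutral[OF ne] by blast
  hence "P T" "Q (S - T)" using assms(1,2) by (auto simp: supported_def)
  moreover have "finite T" "finite (S - T)" using T fin by (auto intro: finite_subset)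
  ultimately have "R (T \<union> (S - T))" using assms(3) by blast
  moreover have "T \<union> (S - T) = S" using T by auto
  ultimately show "R S" by simp
qed

lemma supported_gprod_list:
  assumes "P {}" "\<And>T U. finite T \<Longrightarrow> finite U \<Longrightarrow> T \<inter> U = {} \<Longrightarrow> P T \<Longrightarrow> P U \<Longrightarrow> P (T \<union> U)"
    and "\<And>x. x \<in> set xs \<Longrightarrow> supported P x"
  shows "supported P (gprod_list xs)"
  using assms(3)
proof (induction xs)
  case Nil thus ?case using assms(1) by (simp add: gprod_list_def supported_gone)
next
  case (Cons x xs) thus ?case
    by (simp add: gprod_list_def, intro supported_gmul[where P = P and Q = P]) (auto intro: assms(2))
qed

lemma supported_finite_gmul [simp]: "supported finite (gmul x y)"
  by (simp add: supported_def gmul_def)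

lemma gmul_assoc: "gmul (gmul x y) z = gmul x (gmul y z)"
proof
  fix S :: "'a set"
  show "gmul (gmul x y) z S = gmul x (gmul y z) S"
  proof (cases "finite S")
    case False thus ?thesis by (simp add: gmul_def)
  next
    case fin: True
    have "gmul (gmul x y) z S = (\<Sum>(T, R)\<in>Sigma (Pow S) Pow.
        inv_sign T (S - T) * inv_sign R (T - R) * x R * y (T - R) * z (S - T))"
      unfolding gmul_def using fin
      by (subst sum.Sigma[symmetric])
         (auto simp: sum_distrib_left sum_distrib_right finite_subset mult.assoc intro!: sum.cong)
    also have "\<dots> = (\<Sum>(R, U)\<in>Sigma (Pow S) (\<lambda>R. Pow (S - R)).
        inv_sign R (S - R) * inv_sign U (S - R - U) * x R * y U * z (S - R - U))"
    proof (rule sum.reindex_bij_witness[where i = "\<lambda>(R, U). (R \<union> U, R)" and j = "\<lambda>(T, R). (R, T - R)"])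
      fix a assume "a \<in> Sigma (Pow S) Pow"
      then obtain T R where a: "a = (T, R)" "T \<subseteq> S" "R \<subseteq> T" by auto
      have "S - R - (T - R) = S - T" using a by auto
      thus "(case (case a of (T, R) \<Rightarrow> (R, T - R)) of (R, U) \<Rightarrow>
              inv_sign R (S - R) * inv_sign U (S - R - U) * x R * y U * z (S - R - U)) =
            (case a of (T, R) \<Rightarrow> inv_sign T (S - T) * inv_sign R (T - R) * x R * y (T - R) * z (S - T))"
        using inv_sign_assoc[OF fin a(2,3)] a(1) by simp
    qed (auto simp: Pow_def)
    also have "\<dots> = gmul x (gmul y z) S"
      unfolding gmul_def using fin
      by (subst sum.Sigma[symmetric]) (auto simp: sum_distrib_left mult.assoc intro!: sum.cong)
    finally show ?thesis .
  qed
qed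

lemma gmul_gone_left: assumes "supported finite x" shows "gmul gone x = x"
proof
  fix S :: "'a set"
  show "gmul gone x S = x S"
  proof (cases "finite S")
    case False thus ?thesis using assms unfolding supported_def by (auto simp: gmul_def)
  next
    case True
    have "\<And>T. inv_sign T (S - T) * (if T = {} then 1 else 0) * x (S - T) = (if T = {} then x S else 0)"
      by auto
    thus ?thesis using True by (simp add: gmul_def gone_def gbasis_def)
  qed
qed

lemma gmul_gone_right: assumes "supported finite x" shows "gmul x gone = x"
proof
  fix S :: "'a set"
  show "gmul x gone S = x S"
  proof (cases "finite S")
    case False thus ?thesis using assms unfolding supported_def by (auto simp: gmul_def)
  next
    case True
    have "\<And>T. inv_sign T (S - T) * x T * (if S = T then 1 else 0) = (if S = T then x S else 0)"
      by auto
    thus ?thesis using True by (simp add: gmul_def gone_def gbasis_def)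
  qed
qed

lemma gmul_commute_even:
  assumes "supported (\<lambda>T. even (card T)) x" shows "gmul x y = gmul y x"
proof
  fix S :: "'a set"
  show "gmul x y S = gmul y x S"
  proof (cases "finite S")
    case False thus ?thesis by (simp add: gmul_def)
  next
    case fin: True
    have "(\<Sum>T\<in>Pow S. inv_sign T (S - T) * x T * y (S - T)) =
          (\<Sum>U\<in>Pow S. inv_sign U (S - U) * y U * x (S - U))"
    proof (rule sum.reindex_bij_witness[where i = "\<lambda>T. S - T" and j = "\<lambda>T. S - T"])
      fix T assume T: "T \<in> Pow S"
      have sign: "inv_sign (S - T) T * x T = inv_sign T (S - T) * x T"
      proof (cases "x T = 0")
        case False
        hence "even (card T)" using assms by (auto simp: supported_def)
        moreover have "finite T" "finite (S - T)" using T fin by (auto intro: finite_subset)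
        ultimately show ?thesis by (simp add: inv_sign_swap)
      qed simp
      have "S - (S - T) = T" using T by auto
      hence "inv_sign (S - T) (S - (S - T)) * y (S - T) * x (S - (S - T)) =
             inv_sign (S - T) T * x T * y (S - T)" by (simp add: mult_ac)
      thus "inv_sign (S - T) (S - (S - T)) * y (S - T) * x (S - (S - T)) =
            inv_sign T (S - T) * x T * y (S - T)"
        by (simp add: sign)
    qed auto
    thus ?thesis unfolding gmul_def using fin by simp
  qed
qed

lemma gmul_scale_left: "gmul (\<lambda>S. c * x S) y = (\<lambda>S. c * gmul x y S)"
  by (auto simp: gmul_def sum_distrib_left algebra_simps)

lemma gmul_scale_right: "gmul x (\<lambda>S. c * y S) = (\<lambda>S. c * gmul x y S)"
  by (auto simp: gmul_def sum_distrib_left algebra_simps)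

lemma gmul_add_left: "gmul (\<lambda>S. x S + z S) y = (\<lambda>S. gmul x y S + gmul z y S)"
  by (auto simp: gmul_def sum.distrib algebra_simps)

lemma gmul_add_right: "gmul x (\<lambda>S. y S + z S) = (\<lambda>S. gmul x y S + gmul x z S)"
  by (auto simp: gmul_def sum.distrib algebra_simps)

lemma gmul_diff_right: "gmul x (\<lambda>S. y S - z S) = (\<lambda>S. gmul x y S - gmul x z S)"
  by (auto simp: gmul_def sum_subtractf algebra_simps)

lemma gmul_sum_right: "gmul x (\<lambda>S. \<Sum>i\<in>K. y i S) = (\<lambda>S. \<Sum>i\<in>K. gmul x (y i) S)"
proof
  fix S :: "'a set"
  show "gmul x (\<lambda>S. \<Sum>i\<in>K. y i S) S = (\<Sum>i\<in>K. gmul x (y i) S)"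
    by (cases "finite S") (simp_all add: gmul_def sum_distrib_left sum.swap[of _ K])
qed

lemma gmul_zero_left [simp]: "gmul (\<lambda>_. 0) y = (\<lambda>_. 0)"
  by (auto simp: gmul_def)

lemma gmul_zero_right [simp]: "gmul x (\<lambda>_. 0) = (\<lambda>_. 0)"
  by (auto simp: gmul_def)

lemma gmul_gscal_left: "gmul (gscal c x) y = gscal c (gmul x y)"
  unfolding gscal_def by (rule gmul_scale_left)

lemma gmul_gscal_right: "gmul x (gscal c y) = gscal c (gmul x y)"
  unfolding gscal_def by (rule gmul_scale_right)

lemma gmul_gadd_left: "gmul (gadd x z) y = gadd (gmul x y) (gmul z y)"
  unfolding gadd_def by (rule gmul_add_left)

lemma gscal_gscal: "gscal a (gscal b x) = gscal (a * b) x"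
  by (simp add: gscal_def mult.assoc)

lemma gmul_gbasis:
  assumes "finite T" "finite U"
  shows "gmul (gbasis T) (gbasis U) =
    (if T \<inter> U = {} then gscal (inv_sign T U) (gbasis (T \<union> U)) else (\<lambda>_. 0))"
proof
  fix S :: "'a set"
  show "gmul (gbasis T) (gbasis U) S =
    (if T \<inter> U = {} then gscal (inv_sign T U) (gbasis (T \<union> U)) else (\<lambda>_. 0)) S"
  proof (cases "finite S")
    case False
    hence "S \<noteq> T \<union> U" using assms by auto
    thus ?thesis using False by (simp add: gmul_def gbasis_def gscal_def)
  next
    case True
    have "\<And>R. inv_sign R (S - R) * (if R = T then 1 else 0) * (if S - R = U then 1 else 0)
       = (if R = T then (if S - T = U then inv_sign T U else 0) else 0)" by auto
    hence "gmul (gbasis T) (gbasis U) S = (if T \<subseteq> S \<and> S - T = U then inv_sign T U else 0)"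
      using True by (simp add: gmul_def gbasis_def)
    thus ?thesis by (auto simp: gscal_def gbasis_def)
  qed
qed

lemma gmul_gbasis_anticommute:
  assumes "g \<noteq> h"
  shows "gmul (gbasis {g}) (gbasis {h}) = gscal (-1) (gmul (gbasis {h}) (gbasis {g}))"
  using inv_sign_swap[of "{h}" "{g}"] assms
  by (simp add: gmul_gbasis gscal_gscal insert_commute)

definition signed_basis :: "'g set \<Rightarrow> 'g grass \<Rightarrow> bool" where
  "signed_basis X x \<longleftrightarrow> (\<exists>s. s * s = 1 \<and> x = gscal s (gbasis X))"

lemma signed_basis_gbasis: "signed_basis X (gbasis X)"
  unfolding signed_basis_def by (rule exI[of _ 1]) (simp add: gscal_def)

lemma signed_basis_gmul:
  assumes "signed_basis X x" "signed_basis Y y" "finite X" "finite Y" "X \<inter> Y = {}"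
  shows "signed_basis (X \<union> Y) (gmul x y)"
proof -
  obtain s s' where s: "s * s = 1" "x = gscal s (gbasis X)" "s' * s' = 1" "y = gscal s' (gbasis Y)"
    using assms(1,2) unfolding signed_basis_def by blast
  have "gmul x y = gscal (s * s' * inv_sign X Y) (gbasis (X \<union> Y))"
    using s assms by (simp add: gmul_gscal_left gmul_gscal_right gmul_gbasis gscal_gscal mult_ac)
  moreover have "(s * s' * inv_sign X Y) * (s * s' * inv_sign X Y) = 1"
    using s by (simp add: algebra_simps power_mult_distrib[symmetric])
  ultimately show ?thesis unfolding signed_basis_def by blast
qed

lemma signed_basis_supported: assumes "signed_basis X x" shows "supported (\<lambda>S. S = X) x"
proof -
  obtain s where "x = gscal s (gbasis X)" using assms unfolding signed_basis_def by blast
  thus ?thesis by (simp add: supported_def gscal_def gbasis_def)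
qed

lemma signed_basis_supported_if: "signed_basis X x \<Longrightarrow> P X \<Longrightarrow> supported P x"
  by (erule supported_mono[OF signed_basis_supported]) simp

lemma signed_basis_square: "signed_basis X x \<Longrightarrow> x X * x X = 1"
  unfolding signed_basis_def by (auto simp: gscal_def gbasis_def)

section \<open>Bilinears, \<open>\<tau>\<close> and the Gaussian weight\<close>

definition psibar_psi :: "'v::linorder \<Rightarrow> 'v \<Rightarrow> ('v \<times> bool) grass" where
  "psibar_psi i j = gmul (psibar i) (psi j)"

lemma gens_empty [simp]: "gens {} = {}"
  by (simp add: gens_def)

lemma gens_insert: "gens (insert i B) = {(i, True), (i, False)} \<union> gens B"
  by (auto simp: gens_def)

lemma finite_gens [simp]: "finite B \<Longrightarrow> finite (gens B)"
  by (simp add: gens_def)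

lemma card_gens: assumes "finite B" shows "card (gens B) = 2 * card B"
proof -
  have "card (gens B) = card ((\<lambda>i. (i, True)) ` B) + card ((\<lambda>i. (i, False)) ` B)"
    unfolding gens_def using assms by (intro card_Un_disjoint) auto
  thus ?thesis by (simp add: card_image inj_on_def)
qed

lemma signed_basis_psibar_psi: "signed_basis {(i, True), (j, False)} (psibar_psi i j)"
  using signed_basis_gmul[OF signed_basis_gbasis signed_basis_gbasis, of "{(i, True)}" "{(j, False)}"]
  by (simp add: psibar_psi_def psibar_def psi_def insert_commute)

lemma psibar_psi_even: "supported (\<lambda>T. even (card T)) (psibar_psi i i)"
  by (rule signed_basis_supported_if[OF signed_basis_psibar_psi]) simp

lemma psibar_psi_square: "gmul (psibar_psi i i) (psibar_psi i i) = (\<lambda>_. 0)"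
proof -
  obtain s where "psibar_psi i i = gscal s (gbasis {(i, True), (i, False)})"
    using signed_basis_psibar_psi unfolding signed_basis_def by blast
  thus ?thesis by (simp add: gmul_gscal_left gmul_gscal_right gmul_gbasis) (simp add: gscal_def)
qed

lemma psibar_psi_swap:
  assumes "a \<noteq> b"
  shows "gmul (psibar_psi a b) (psibar_psi b a) = gscal (-1) (gmul (psibar_psi a a) (psibar_psi b b))"
proof -
  have anti: "gmul (psi b) (psibar b) = gscal (-1) (psibar_psi b b)"
    unfolding psibar_psi_def psi_def psibar_def by (rule gmul_gbasis_anticommute) simp
  have comm: "gmul (psibar_psi b b) (psi a) = gmul (psi a) (psibar_psi b b)"
    using gmul_commute_even psibar_psi_even by blast
  have "gmul (psibar_psi a b) (psibar_psi b a) = gmul (psibar a) (gmul (gmul (psi b) (psibar b)) (psi a))"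
    unfolding psibar_psi_def by (simp add: gmul_assoc)
  also have "\<dots> = gscal (-1) (gmul (psibar a) (gmul (psi a) (psibar_psi b b)))"
    unfolding anti by (simp add: gmul_gscal_left gmul_gscal_right comm)
  finally show ?thesis
    unfolding psibar_psi_def by (simp add: gmul_assoc)
qed

abbreviation weight_factor :: "('v::linorder \<Rightarrow> complex) \<Rightarrow> 'v \<Rightarrow> ('v \<times> bool) grass" where
  "weight_factor t i \<equiv> gadd gone (gscal (t i) (psibar_psi i i))"

lemma gprod_list_map_insort:
  assumes "\<And>x. supported (\<lambda>T. even (card T)) (h x)"
  shows "gprod_list (map h (insort i xs)) = gmul (h i) (gprod_list (map h xs))"
proof (induction xs)
  case Nil thus ?case by (simp add: gprod_list_def)
next
  case (Cons x xs)
  show ?case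
  proof (cases "i \<le> x")
    case True thus ?thesis by (simp add: gprod_list_def)
  next
    case False
    hence "gprod_list (map h (insort i (x # xs))) = gmul (gmul (h x) (h i)) (gprod_list (map h xs))"
      using Cons by (simp add: gprod_list_def gmul_assoc)
    thus ?thesis using gmul_commute_even[OF assms[of x]] by (simp add: gprod_list_def gmul_assoc)
  qed
qed

lemma gprod_list_map_sorted_insert:
  assumes "\<And>x. supported (\<lambda>T. even (card T)) (h x)" "finite B" "i \<notin> B"
  shows "gprod_list (map h (sorted_list_of_set (insert i B))) =
         gmul (h i) (gprod_list (map h (sorted_list_of_set B)))"
  using assms by (simp add: sorted_list_of_set_insert gprod_list_map_insort)

lemma tau_eq: "tau B = gprod_list (map (\<lambda>i. psibar_psi i i) (sorted_list_of_set B))"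
  by (simp add: tau_def psibar_psi_def)

lemma gauss_weight_eq: "gauss_weight t B = gprod_list (map (weight_factor t) (sorted_list_of_set B))"
  by (simp add: gauss_weight_def psibar_psi_def)

lemma tau_empty [simp]: "tau {} = gone"
  by (simp add: tau_eq gprod_list_def)

lemma tau_insert: "finite B \<Longrightarrow> i \<notin> B \<Longrightarrow> tau (insert i B) = gmul (psibar_psi i i) (tau B)"
  unfolding tau_eq by (rule gprod_list_map_sorted_insert) (auto intro: psibar_psi_even)

lemma tau_remove: "finite B \<Longrightarrow> i \<in> B \<Longrightarrow> tau B = gmul (psibar_psi i i) (tau (B - {i}))"
  using tau_insert[of "B - {i}" i] by (simp add: insert_absorb)

lemma gauss_weight_insert:
  assumes "finite B" "i \<notin> B"
  shows "gauss_weight t (insert i B) = gmul (weight_factor t i) (gauss_weight t B)"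
  unfolding gauss_weight_eq using assms
  by (intro gprod_list_map_sorted_insert supported_gadd supported_gscal psibar_psi_even supported_gone) auto

lemma supported_finite_tau: "supported finite (tau B)"
  by (cases "sorted_list_of_set B") (simp_all add: tau_eq gprod_list_def supported_gbasis gone_def)

lemma signed_basis_tau: "finite B \<Longrightarrow> signed_basis (gens B) (tau B)"
proof (induction B rule: finite_induct)
  case empty thus ?case by (simp add: gone_def signed_basis_gbasis)
next
  case (insert i B)
  thus ?case unfolding tau_insert[OF insert(1,2)] gens_insert
    by (intro signed_basis_gmul signed_basis_psibar_psi) (auto simp: gens_def)
qed

lemma psibar_psi_tau_mem: "finite B \<Longrightarrow> i \<in> B \<Longrightarrow> gmul (psibar_psi i i) (tau B) = (\<lambda>_. 0)"
  by (simp add: tau_remove[of B i] gmul_assoc[symmetric] psibar_psi_square)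

lemma gauss_weight_tau_subset:
  assumes "finite C" "finite B" "C \<subseteq> B"
  shows "gmul (gauss_weight t C) (tau B) = tau B"
  using assms
proof (induction C rule: finite_induct)
  case empty thus ?case by (simp add: gauss_weight_eq gprod_list_def gmul_gone_left supported_finite_tau)
next
  case (insert i C)
  hence "gmul (gauss_weight t (insert i C)) (tau B) = gmul (weight_factor t i) (tau B)"
    by (simp add: gauss_weight_insert gmul_assoc)
  also have "\<dots> = tau B"
    using insert by (simp add: gmul_gadd_left gmul_gscal_left gmul_gone_left supported_finite_tau
        psibar_psi_tau_mem) (simp add: gadd_def gscal_def)
  finally show ?case .
qed

lemma gauss_weight_tau_remove:
  assumes "finite A" "i \<in> A"
  shows "gmul (gauss_weight t A) (tau (A - {i})) = gadd (tau (A - {i})) (gscal (t i) (tau A))"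
proof -
  have "gauss_weight t A = gmul (weight_factor t i) (gauss_weight t (A - {i}))"
    using gauss_weight_insert[of "A - {i}" i t] assms by (simp add: insert_absorb)
  thus ?thesis using assms
    by (simp add: gmul_assoc gauss_weight_tau_subset gmul_gadd_left gmul_gscal_left gmul_gone_left
        supported_finite_tau tau_remove[of A i])
qed

section \<open>Charge\<close>

definition charge :: "('v \<times> bool) set \<Rightarrow> 'v \<Rightarrow> int" where
  "charge S i = of_bool ((i, True) \<in> S) - of_bool ((i, False) \<in> S)"

lemma charge_Un: "T \<inter> U = {} \<Longrightarrow> charge (T \<union> U) = (\<lambda>i. charge T i + charge U i)"
  by (auto simp: charge_def fun_eq_iff)

lemma charge_gens: "charge (gens B) = (\<lambda>_. 0)"
  by (auto simp: charge_def gens_def fun_eq_iff)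

lemma supported_charge_gmul:
  "supported (\<lambda>S. charge S = c) x \<Longrightarrow> supported (\<lambda>S. charge S = d) y \<Longrightarrow>
   supported (\<lambda>S. charge S = (\<lambda>i. c i + d i)) (gmul x y)"
  by (erule supported_gmul, assumption) (simp add: charge_Un)

lemma charge_psibar_psi:
  "supported (\<lambda>S. charge S = (\<lambda>x. of_bool (x = i) - of_bool (x = j))) (psibar_psi i j)"
  by (rule signed_basis_supported_if[OF signed_basis_psibar_psi]) (auto simp: charge_def)

lemma charge_psibar_psi_diag: "supported (\<lambda>S. charge S = (\<lambda>_. 0)) (psibar_psi i i)"
  using charge_psibar_psi[of i i] by simp

lemma charge_tau: "finite B \<Longrightarrow> supported (\<lambda>S. charge S = (\<lambda>_. 0)) (tau B)"
  by (rule signed_basis_supported_if[OF signed_basis_tau]) (auto simp: charge_gens)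

lemma charge_gauss_weight: "supported (\<lambda>S. charge S = (\<lambda>_. 0)) (gauss_weight t B)"
  unfolding gauss_weight_eq
  by (intro supported_gprod_list) (auto simp: charge_def charge_Un
      intro!: supported_gadd supported_gscal supported_gone charge_psibar_psi_diag)

lemma charge_psibar_psi_tau:
  assumes "finite B"
  shows "supported (\<lambda>S. charge S = (\<lambda>x. of_bool (x = i) - of_bool (x = j)))
           (gmul (psibar_psi i j) (tau B))"
  using supported_charge_gmul[OF charge_psibar_psi charge_tau[OF assms]] by simp

section \<open>The Gaussian integral\<close>

text \<open>\<open>\<tau>\<^sub>A\<close> is \<open>\<plusminus>\<close> the basis monomial on \<open>gens A\<close>, so its coefficient \<open>tau A (gens A)\<close> is its own
  inverse and converts the top coefficient into the coefficient of \<open>\<tau>\<^sub>A\<close>.\<close>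

definition gauss_integral :: "('v::linorder \<Rightarrow> complex) \<Rightarrow> 'v set \<Rightarrow> ('v \<times> bool) grass \<Rightarrow> complex"
  where "gauss_integral t A X = gmul (gauss_weight t A) X (gens A) * tau A (gens A)"

lemma berezin_gauss_weight:
  assumes "finite A" "supported (\<lambda>S. S \<subseteq> gens A) X"
  shows "berezin A (gmul (gauss_weight t A) X) = gconst (gauss_integral t A X)"
proof
  fix S
  have W: "supported (\<lambda>S. S \<subseteq> gens A) (gauss_weight t A)"
    unfolding gauss_weight_eq using assms(1)
    by (intro supported_gprod_list)
       (auto intro!: supported_gadd supported_gscal supported_gone
         signed_basis_supported_if[OF signed_basis_psibar_psi] simp: gens_def)
  have F: "supported (\<lambda>S. S \<subseteq> gens A) (gmul (gauss_weight t A) X)"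
    by (rule supported_gmul[OF W assms(2)]) simp
  show "berezin A (gmul (gauss_weight t A) X) S = gconst (gauss_integral t A X) S"
  proof (cases "S = {}")
    case True
    thus ?thesis
      by (simp add: berezin_def gauss_integral_def gconst_def gscal_def gone_def[symmetric]
          gmul_gone_right supported_finite_tau) (simp add: gone_def gbasis_def)
  next
    case False
    hence "gmul (gauss_weight t A) X (gens A \<union> S) = 0" if "S \<inter> gens A = {}"
      using F that by (auto simp: supported_def)
    thus ?thesis using False by (simp add: berezin_def gconst_def gscal_def gone_def gbasis_def)
  qed
qed

lemma gauss_integral_tau: "finite A \<Longrightarrow> gauss_integral t A (tau A) = 1"
  by (simp add: gauss_integral_def gauss_weight_tau_subset signed_basis_square[OF signed_basis_tau])

lemma gauss_integral_tau_remove: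
  assumes "finite A" "i \<in> A"
  shows "gauss_integral t A (tau (A - {i})) = t i"
proof -
  have "gens (A - {i}) \<noteq> gens A" using assms by (auto simp: gens_def)
  hence "tau (A - {i}) (gens A) = 0"
    using signed_basis_supported[OF signed_basis_tau[of "A - {i}"]] assms
    by (auto simp: supported_def)
  thus ?thesis using assms
    by (simp add: gauss_integral_def gauss_weight_tau_remove gadd_def gscal_def
        signed_basis_square[OF signed_basis_tau] mult.assoc)
qed

lemma gauss_integral_charged:
  assumes "supported (\<lambda>S. charge S = c) X" "c i \<noteq> 0"
  shows "gauss_integral t A X = 0"
proof -
  have "supported (\<lambda>S. charge S = c) (gmul (gauss_weight t A) X)"
    using supported_charge_gmul[OF charge_gauss_weight assms(1)] by simp
  moreover have "charge (gens A) \<noteq> c" using assms(2) by (auto simp: charge_gens)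
  ultimately have "gmul (gauss_weight t A) X (gens A) = 0" by (auto simp: supported_def)
  thus ?thesis by (simp add: gauss_integral_def)
qed

lemma gauss_integral_zero [simp]: "gauss_integral t A (\<lambda>_. 0) = 0"
  by (simp add: gauss_integral_def)

lemma gauss_integral_gscal: "gauss_integral t A (gscal c X) = c * gauss_integral t A X"
  by (simp add: gauss_integral_def gmul_gscal_right) (simp add: gscal_def)

section \<open>The observable and \<open>f\<^sub>A\<close>\<close>

lemma obs_Nil: "obs [] [] = gone"
  by (simp add: obs_def gprod_list_def)

lemma obs_Cons: "obs (a # I) (b # J) = gmul (psibar_psi a b) (obs I J)"
  by (simp add: obs_def gprod_list_def psibar_psi_def)

lemma obs_degree:
  "length I = length J \<Longrightarrow> supported (\<lambda>S. card S = 2 * length I) (obs I J)"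
proof (induction I arbitrary: J)
  case Nil thus ?case by (simp add: obs_Nil supported_gone)
next
  case (Cons a I)
  then obtain b J' where J: "J = b # J'" "length I = length J'" by (cases J) auto
  show ?case unfolding J obs_Cons
    by (rule supported_gmul[OF signed_basis_supported[OF signed_basis_psibar_psi] Cons.IH[OF J(2)]])
       (auto simp: card_Un_disjoint)
qed

lemma supported_obs:
  "set I \<subseteq> A \<Longrightarrow> set J \<subseteq> A \<Longrightarrow> supported (\<lambda>S. S \<subseteq> gens A) (obs I J)"
  unfolding obs_def
  by (rule supported_gprod_list)
     (auto intro!: signed_basis_supported_if[OF signed_basis_psibar_psi, unfolded psibar_psi_def]
       dest: set_zip_leftD set_zip_rightD simp: gens_def)

lemma supported_fA:
  assumes "supported P (tau A)" "\<And>i. i \<in> A \<Longrightarrow> supported P (tau (A - {i}))"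
    and "\<And>i j. i \<in> A \<Longrightarrow> j \<in> A - {i} \<Longrightarrow> supported P (gmul (psibar_psi i j) (tau (A - {i, j})))"
  shows "supported P (fA lam A)"
  using assms unfolding supported_def fA_def psibar_psi_def[symmetric]
  by (metis (no_types, lifting) add_0 diff_zero mult_zero_right sum.neutral)

lemma fA_subset_gens: "finite A \<Longrightarrow> supported (\<lambda>S. S \<subseteq> gens A) (fA lam A)"
  by (intro supported_fA signed_basis_supported_if[OF signed_basis_tau]
      supported_gmul[OF signed_basis_supported[OF signed_basis_psibar_psi]])
     (auto simp: gens_def)

lemma fA_degree:
  assumes "finite A"
  shows "supported (\<lambda>S. 2 * card A \<le> card S + 2) (fA lam A)"
proof (rule supported_fA)
  show "supported (\<lambda>S. 2 * card A \<le> card S + 2) (tau A)"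
    using assms by (intro signed_basis_supported_if[OF signed_basis_tau]) (auto simp: card_gens)
next
  fix i assume "i \<in> A"
  thus "supported (\<lambda>S. 2 * card A \<le> card S + 2) (tau (A - {i}))"
    using assms by (intro signed_basis_supported_if[OF signed_basis_tau]) (auto simp: card_gens)
next
  fix i j assume ij: "i \<in> A" "j \<in> A - {i}"
  hence sub: "{i, j} \<subseteq> A" and two: "card {i, j} = 2" by auto
  hence "card (A - {i, j}) + 2 = card A"
    using card_mono[OF assms sub] by (simp add: card_Diff_subset)
  thus "supported (\<lambda>S. 2 * card A \<le> card S + 2) (gmul (psibar_psi i j) (tau (A - {i, j})))"
    using assms
    by (intro supported_gmul[OF signed_basis_supported[OF signed_basis_psibar_psi]
          signed_basis_supported[OF signed_basis_tau]]) (auto simp: card_Un_disjoint card_gens)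
qed

lemma obs_fA_eq_zero:
  assumes "finite A" "set I \<subseteq> A" "set J \<subseteq> A" "length I = length J" "2 \<le> length I"
  shows "gmul (obs I J) (fA lam A) = (\<lambda>_. 0)"
proof -
  have "supported (\<lambda>_. False) (gmul (obs I J) (fA lam A))"
  proof (rule supported_gmul[OF supported_conj[OF supported_obs obs_degree]
               supported_conj[OF fA_subset_gens fA_degree]])
    fix T U
    assume TU: "finite T" "finite U" "T \<inter> U = {}" "T \<subseteq> gens A \<and> card T = 2 * length I"
      "U \<subseteq> gens A \<and> 2 * card A \<le> card U + 2"
    have "card (T \<union> U) \<le> card (gens A)" using TU assms(1) by (intro card_mono) auto
    thus False using TU assms by (simp add: card_Un_disjoint card_gens)
  qed (use assms in auto)
  thus ?thesis by (auto simp: supported_def)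
qed

lemma gmul_fA:
  "gmul X (fA lam A) = (\<lambda>S. lam * (1 - of_nat (card A)) * gmul X (tau A) S
      + (\<Sum>i\<in>A. gmul X (tau (A - {i})) S)
      - (\<Sum>i\<in>A. \<Sum>j\<in>A - {i}. gmul X (gmul (psibar_psi i j) (tau (A - {i, j}))) S))"
  unfolding fA_def psibar_psi_def
  by (simp only: gmul_diff_right gmul_add_right gmul_scale_right gmul_sum_right)

lemma gauss_integral_gmul_fA:
  "gauss_integral t A (gmul X (fA lam A)) =
     lam * (1 - of_nat (card A)) * gauss_integral t A (gmul X (tau A))
     + (\<Sum>i\<in>A. gauss_integral t A (gmul X (tau (A - {i}))))
     - (\<Sum>i\<in>A. \<Sum>j\<in>A - {i}. gauss_integral t A (gmul X (gmul (psibar_psi i j) (tau (A - {i, j})))))"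
  unfolding gauss_integral_def gmul_fA
  by (simp only: gmul_diff_right gmul_add_right gmul_scale_right gmul_sum_right)
     (simp add: algebra_simps sum_distrib_left sum_distrib_right)

lemma gauss_integral_neutral_gmul_charged:
  assumes "supported (\<lambda>S. charge S = (\<lambda>_. 0)) X" "finite B" "i \<noteq> j"
  shows "gauss_integral t A (gmul X (gmul (psibar_psi i j) (tau B))) = 0"
  using gauss_integral_charged[OF supported_charge_gmul[OF assms(1) charge_psibar_psi_tau[OF assms(2)]],
      of i] assms(3)
  by simp

lemma gauss_integral_fA:
  assumes "finite A"
  shows "gauss_integral t A (gmul gone (fA lam A)) = lam + (\<Sum>i\<in>A. t i - lam)"
proof -
  have "gauss_integral t A (gmul gone (gmul (psibar_psi i j) (tau (A - {i, j})))) = 0"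
    if "j \<in> A - {i}" for i j
    using that assms by (intro gauss_integral_neutral_gmul_charged supported_gone) (auto simp: charge_def)
  hence "gauss_integral t A (gmul gone (fA lam A)) = lam * (1 - of_nat (card A)) + (\<Sum>i\<in>A. t i)"
    using assms
    by (simp add: gauss_integral_gmul_fA gmul_gone_left supported_finite_tau gauss_integral_tau
        gauss_integral_tau_remove)
  thus ?thesis by (simp add: sum_subtractf algebra_simps)
qed

lemma gauss_integral_diag_fA:
  assumes "finite A" "a \<in> A"
  shows "gauss_integral t A (gmul (psibar_psi a a) (fA lam A)) = 1"
proof -
  have "gauss_integral t A (gmul (psibar_psi a a) (tau (A - {i}))) = (if i = a then 1 else 0)"
    if "i \<in> A" for i
  proof (cases "i = a")
    case True
    thus ?thesis using tau_remove[OF assms, symmetric] gauss_integral_tau[OF assms(1)] by simp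
  next
    case False
    thus ?thesis using assms psibar_psi_tau_mem[of "A - {i}" a] by simp
  qed
  moreover have "gauss_integral t A (gmul (psibar_psi a a) (gmul (psibar_psi i j) (tau (A - {i, j})))) = 0"
    if "j \<in> A - {i}" for i j
    using that assms(1) by (intro gauss_integral_neutral_gmul_charged charge_psibar_psi_diag) auto
  ultimately show ?thesis
    using assms by (simp add: gauss_integral_gmul_fA psibar_psi_tau_mem)
qed

lemma gauss_integral_offdiag_fA:
  assumes "finite A" "a \<in> A" "b \<in> A" "a \<noteq> b"
  shows "gauss_integral t A (gmul (psibar_psi a b) (fA lam A)) = 1"
proof -
  have tau_term: "gauss_integral t A (gmul (psibar_psi a b) (tau B)) = 0" if "finite B" for B
    using gauss_integral_charged[OF charge_psibar_psi_tau[OF that], of a] assms(4) by simp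
  have completion: "gmul (psibar_psi a b) (gmul (psibar_psi b a) (tau (A - {b, a}))) = gscal (-1) (tau A)"
  proof -
    have "b \<in> A - {a}" "A - {a} - {b} = A - {b, a}" using assms(3,4) by auto
    hence "gmul (psibar_psi b b) (tau (A - {b, a})) = tau (A - {a})"
      using tau_remove[of "A - {a}" b] assms(1) by simp
    moreover have "gmul (psibar_psi a a) (tau (A - {a})) = tau A"
      using tau_remove[OF assms(1,2), symmetric] .
    ultimately show ?thesis
      using assms(4) by (simp add: gmul_assoc[symmetric] psibar_psi_swap gmul_gscal_left)
                        (simp add: gmul_assoc)
  qed
  have pair_term: "gauss_integral t A (gmul (psibar_psi a b) (gmul (psibar_psi i j) (tau (A - {i, j}))))
      = (if i = b then if j = a then -1 else 0 else 0)" if "j \<in> A - {i}" for i j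
  proof (cases "i = b \<and> j = a")
    case True
    thus ?thesis using completion assms(1) by (simp add: gauss_integral_gscal gauss_integral_tau)
  next
    case False
    let ?c = "\<lambda>x. of_bool (x = a) - of_bool (x = b) + (of_bool (x = i) - of_bool (x = j)) :: int"
    have "supported (\<lambda>S. charge S = ?c) (gmul (psibar_psi a b) (gmul (psibar_psi i j) (tau (A - {i, j}))))"
      by (rule supported_charge_gmul[OF charge_psibar_psi charge_psibar_psi_tau]) (use assms(1) in simp)
    moreover have "?c (if i = b then a else b) \<noteq> 0" using False assms(4) by auto
    ultimately have "gauss_integral t A (gmul (psibar_psi a b) (gmul (psibar_psi i j) (tau (A - {i, j})))) = 0"
      by (rule gauss_integral_charged)
    thus ?thesis using False by simp
  qed
  have "(\<Sum>j\<in>A - {i}. gauss_integral t A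
          (gmul (psibar_psi a b) (gmul (psibar_psi i j) (tau (A - {i, j}))))) = (if i = b then -1 else 0)"
    for i
  proof (cases "i = b")
    case True
    thus ?thesis using assms by (simp add: pair_term)
  qed (simp add: pair_term)
  hence "(\<Sum>i\<in>A. \<Sum>j\<in>A - {i}. gauss_integral t A
          (gmul (psibar_psi a b) (gmul (psibar_psi i j) (tau (A - {i, j}))))) = -1"
    using assms(1,3) by simp
  thus ?thesis using assms(1) by (simp add: gauss_integral_gmul_fA tau_term)
qed

theorem lemma6p1:
  fixes V A :: "'v::linorder set" and t :: "'v \<Rightarrow> complex" and lam :: complex
    and I J :: "'v list" and k :: nat
  assumes "finite V" and "A \<subseteq> V"
    and "length I = k" and "length J = k"
    and "distinct I" and "distinct J"
    and "set I \<subseteq> A" and "set J \<subseteq> A"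
  shows "berezin A (gmul (gauss_weight t A) (gmul (obs I J) (fA lam A)))
       = gconst (if k = 0 then lam + (\<Sum>i\<in>A. (t i - lam))
                 else if k = 1 then 1 else 0)"
proof -
  have fin: "finite A" using finite_subset[OF assms(2,1)] .
  have "berezin A (gmul (gauss_weight t A) (gmul (obs I J) (fA lam A)))
      = gconst (gauss_integral t A (gmul (obs I J) (fA lam A)))"
    by (rule berezin_gauss_weight[OF fin supported_gmul[OF supported_obs fA_subset_gens[OF fin]]])
       (use assms in auto)
  moreover consider "k = 0" | "k = 1" | "2 \<le> k" by linarith
  hence "gauss_integral t A (gmul (obs I J) (fA lam A))
       = (if k = 0 then lam + (\<Sum>i\<in>A. (t i - lam)) else if k = 1 then 1 else 0)"
  proof cases
    case 1
    thus ?thesis using assms(3,4) fin by (simp add: obs_Nil gauss_integral_fA)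
  next
    case 2
    then obtain a b where "I = [a]" "J = [b]"
      using assms(3,4) by (metis One_nat_def length_0_conv length_Suc_conv)
    thus ?thesis using 2 assms(7,8) fin
      by (cases "a = b") (simp_all add: obs_Cons obs_Nil gmul_gone_right psibar_psi_def
          gauss_integral_diag_fA[unfolded psibar_psi_def] gauss_integral_offdiag_fA[unfolded psibar_psi_def])
  next
    case 3
    thus ?thesis using assms(3,4,7,8) fin by (simp add: obs_fA_eq_zero)
  qed
  ultimately show ?thesis by simp
qed

end
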